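(* Let $(X,+)$ be an abelian group, $(g,\gamma)$ a construction pair on $(X,+)$, and $C=\langle b\rangle$ a cyclic group such that, if $C$ is finite, both $|g|$ and $r(g,\gamma)$ divide $|C|$. Then the set $C\times X$ with multiplication $$(b^i,x)\cdot(b^j,y)=\Big(b^{i+j},\ g^{-j}(x)+y+\sum_{k\in I(i+j,-j)}g^{-k}(\gamma(x,y))\Big)$$ is a (well-defined) Moufang loop $Q=C\ltimes_{(g,\gamma)}X$ with neutral element $(1,0)$ and inverses $(b^i,x)^{-1}=(b^{-i},-g^i(x))$.
   Context: Let $(X,+)$ be an abelian group. A map $\gamma:X\times X\to X$ is symmetric if $\gamma(x,y)=\gamma(y,x)$, alternating if $\gamma(x,x)=0$, biadditive if additive in each argument. Its radical is $\mathrm{Rad}(\gamma)=\{x\in X:\gamma(x,y)=0\text{ for all }y\in X\}$. A construction pair on $(X,+)$ is a pair $(g,\gamma)$ where $g$ is a permutation of $X$ and $\gamma:X\times X\to X$ is symmetric, alternating and biadditive, such that for all $x,y,z\in X$: (C1) $g^{-1}(g(x)+g(y))=x+y+\gamma(x,y)+g^{-1}(\gamma(x,y))+g^{-2}(\gamma(x,y))$; (C2) $\gamma(\gamma(x,y),z)=0$; (C3) $g^{-1}(\gamma(x,y))=\gamma(g(x),y)$. For integers $i,j$ the interval $I(i,j)\subseteq\mathbb Z$ is $\emptyset$ if $i=j$, $\{i,\dots,j-1\}$ if $i<j$, and $\{j,\dots,i-1\}$ if $j<i$. $r(g,\gamma)$ is the least positive integer $r$ such that $\sum_{0\le k<r}g^k(x)\in\mathrm{Rad}(\gamma)$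 for all $x\in X$, or $\infty$ if none exists. A loop is Moufang if it satisfies $xy\cdot zx=(x\cdot yz)x$ for all $x,y,z$. *)

theory Defs
  imports Main
begin

definition gpow :: "('a \<Rightarrow> 'a) \<Rightarrow> int \<Rightarrow> 'a \<Rightarrow> 'a" where
  "gpow g k = (if 0 \<le> k then g ^^ nat k else inv g ^^ nat (- k))"

definition construction_pair :: "('a::ab_group_add \<Rightarrow> 'a) \<Rightarrow> ('a \<Rightarrow> 'a \<Rightarrow> 'a) \<Rightarrow> bool" where
  "construction_pair g \<gamma> \<longleftrightarrow>
     bij g \<and>
     (\<forall>x y. \<gamma> x y = \<gamma> y x) \<and>
     (\<forall>x. \<gamma> x x = 0) \<and>
     (\<forall>x y z. \<gamma> (x + y) z = \<gamma> x z + \<gamma> y z) \<and>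
     (\<forall>x y z. \<gamma> x (y + z) = \<gamma> x y + \<gamma> x z) \<and>
     (\<forall>x y. inv g (g x + g y) = x + y + \<gamma> x y + inv g (\<gamma> x y) + (inv g ^^ 2) (\<gamma> x y)) \<and>
     (\<forall>x y z. \<gamma> (\<gamma> x y) z = 0) \<and>
     (\<forall>x y. inv g (\<gamma> x y) = \<gamma> (g x) y)"

definition Rad :: "('a \<Rightarrow> 'a \<Rightarrow> 'a::zero) \<Rightarrow> 'a set" where
  "Rad \<gamma> = {x. \<forall>y. \<gamma> x y = 0}"

(* r(g,gamma); the value 0 encodes infinity *)
definition r_gg :: "('a::comm_monoid_add \<Rightarrow> 'a) \<Rightarrow> ('a \<Rightarrow> 'a \<Rightarrow> 'a) \<Rightarrow> nat" where
  "r_gg g \<gamma> = (if \<exists>r>0. \<forall>x. (\<Sum>k<r. (g ^^ k) x) \<in> Rad \<gamma>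
                then LEAST r. r > 0 \<and> (\<forall>x. (\<Sum>k<r. (g ^^ k) x) \<in> Rad \<gamma>) else 0)"

(* order |g| of a permutation; the value 0 encodes infinite order *)
definition perm_order :: "('a \<Rightarrow> 'a) \<Rightarrow> nat" where
  "perm_order g = (if \<exists>k>0. g ^^ k = id then LEAST k. k > 0 \<and> g ^^ k = id else 0)"

definition Ival :: "int \<Rightarrow> int \<Rightarrow> int set" where
  "Ival i j = (if i = j then {} else if i < j then {i..<j} else {j..<i})"

(* Cyclic group C = <b> of order n (n = 0 means infinite), b^i represented by i;
   canonical representatives: {0..<n} if n > 0, all integers if n = 0 *)
definition cyc_carrier :: "nat \<Rightarrow> int set" where
  "cyc_carrier n = (if n = 0 then UNIV else {0..<int n})"

definition sd_comp :: "('a::ab_group_add \<Rightarrow> 'a) \<Rightarrow> ('a \<Rightarrow> 'a \<Rightarrow> 'a) \<Rightarrow> int \<Rightarrow> 'a \<Rightarrow> int \<Rightarrow> 'a \<Rightarrow> 'a" where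
  "sd_comp g \<gamma> i x j y =
     gpow g (- j) x + y + (\<Sum>k\<in>Ival (i + j) (- j). gpow g (- k) (\<gamma> x y))"

definition sd_mult :: "nat \<Rightarrow> ('a::ab_group_add \<Rightarrow> 'a) \<Rightarrow> ('a \<Rightarrow> 'a \<Rightarrow> 'a) \<Rightarrow> int \<times> 'a \<Rightarrow> int \<times> 'a \<Rightarrow> int \<times> 'a" where
  "sd_mult n g \<gamma> p q = (case p of (i, x) \<Rightarrow> case q of (j, y) \<Rightarrow>
      ((i + j) mod int n, sd_comp g \<gamma> i x j y))"

definition sd_carrier :: "nat \<Rightarrow> (int \<times> 'a) set" where
  "sd_carrier n = cyc_carrier n \<times> UNIV"

definition is_loop :: "'b set \<Rightarrow> ('b \<Rightarrow> 'b \<Rightarrow> 'b) \<Rightarrow> 'b \<Rightarrow> bool" where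
  "is_loop Q m e \<longleftrightarrow>
     e \<in> Q \<and>
     (\<forall>a\<in>Q. \<forall>b\<in>Q. m a b \<in> Q) \<and>
     (\<forall>a\<in>Q. m e a = a \<and> m a e = a) \<and>
     (\<forall>a\<in>Q. \<forall>b\<in>Q. \<exists>!x. x \<in> Q \<and> m a x = b) \<and>
     (\<forall>a\<in>Q. \<forall>b\<in>Q. \<exists>!y. y \<in> Q \<and> m y a = b)"

definition is_moufang_loop :: "'b set \<Rightarrow> ('b \<Rightarrow> 'b \<Rightarrow> 'b) \<Rightarrow> 'b \<Rightarrow> bool" where
  "is_moufang_loop Q m e \<longleftrightarrow> is_loop Q m e \<and>
     (\<forall>x\<in>Q. \<forall>y\<in>Q. \<forall>z\<in>Q. m (m x y) (m z x) = m (m x (m y z)) x)"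

end

theory Submission
  imports Defs
begin

text \<open>
  Write \<open>S c a b\<close> (\<open>orbit_sum\<close> below) for the sum of \<open>g\<^sup>-\<^sup>k c\<close> over \<open>k \<in> I(a,b)\<close>. The values
  of the alternating biadditive map \<open>\<gamma>\<close> have order 2, and \<open>I(a,b)\<close> and \<open>I(b,d)\<close> have symmetric
  difference \<open>I(a,d)\<close>, so \<open>S (\<gamma> u v)\<close> is a cocycle. Condition (C1) says that
  \<open>g\<^sup>m (u + v) = g\<^sup>m u + g\<^sup>m v + S (\<gamma> u v) (2m) (-m)\<close> for \<open>m = \<plusminus>1\<close>, and the cocycle
  identity propagates this expansion to all integers \<open>m\<close>. With it, the products in the loop
  \<open>\<int> \<times> X\<close> (the case of an infinite cyclic group) can be expanded completely, and the Moufang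
  and inverse property identities reduce to cancellations of terms of order 2.
  For finite \<open>C\<close> of order \<open>n\<close>, \<open>|g|\<close> dividing \<open>n\<close> gives \<open>g\<^sup>n = id\<close>, and \<open>r(g,\<gamma>)\<close> dividing \<open>n\<close>
  gives \<open>S (\<gamma> x y) a (a + n) = \<gamma> (\<Sum>k<n. g\<^sup>k (g\<^sup>a x)) y = 0\<close>; hence the product is
  compatible with reduction of exponents mod \<open>n\<close>, and \<open>Q\<close> is a retract of the loop on \<open>\<int> \<times> X\<close>.
\<close>

section \<open>Intervals, powers and retracts\<close>

lemma mem_Ival: "k \<in> Ival a b \<longleftrightarrow> (a \<le> k) \<noteq> (b \<le> k)"
  by (auto simp: Ival_def)

lemma finite_Ival [simp]: "finite (Ival a b)"
  by (simp add: Ival_def)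

lemma Ival_commute: "Ival a b = Ival b a"
  by (auto simp: mem_Ival)

lemma Ival_self [simp]: "Ival a a = {}"
  by (simp add: Ival_def)

lemma Ival_symdiff: "(Ival a b - Ival b c) \<union> (Ival b c - Ival a b) = Ival a c"
  by (auto simp: mem_Ival)

lemma Ival_shift: "(\<lambda>k. k - m) ` Ival a b = Ival (a - m) (b - m)"
proof -
  have "k \<in> (\<lambda>k. k - m) ` Ival a b \<longleftrightarrow> k + m \<in> Ival a b" for k
    by (auto simp: image_iff intro: bexI[of _ "k + m"])
  then show ?thesis by (auto simp: mem_Ival)
qed

lemma sum_symdiff_self_inverse:
  fixes f :: "'b \<Rightarrow> 'a::ab_group_add"
  assumes "finite A" "finite B" and self_inverse: "\<And>k. f k + f k = 0"
  shows "sum f A + sum f B = sum f ((A - B) \<union> (B - A))"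
proof -
  have "sum f (A \<inter> B) + sum f (A \<inter> B) = 0"
    using self_inverse by (simp add: sum.distrib[symmetric])
  moreover have "sum f ((A - B) \<union> (B - A)) = sum f (A - B) + sum f (B - A)"
    using assms(1,2) by (intro sum.union_disjoint) auto
  ultimately show ?thesis
    using sum.Int_Diff[OF assms(1), of f B] sum.Int_Diff[OF assms(2), of f A]
    by (simp add: Int_commute algebra_simps)
qed

lemma gpow_0 [simp]: "gpow g 0 = id"
  by (simp add: gpow_def)

lemma gpow_1: "gpow g 1 = g"
  by (simp add: gpow_def)

lemma gpow_minus_1: "gpow g (- 1) = inv g"
  by (simp add: gpow_def)

lemma gpow_of_nat: "gpow g (int k) = g ^^ k"
  by (simp add: gpow_def)

lemma gpow_succ:
  assumes "bij g" shows "gpow g (k + 1) x = g (gpow g k x)"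
proof (cases "0 \<le> k")
  case True
  then have "nat (k + 1) = Suc (nat k)" by simp
  with True show ?thesis by (simp add: gpow_def)
next
  case False
  then have "nat (- k) = Suc (nat (- (k + 1)))" by simp
  with False assms show ?thesis by (simp add: gpow_def bij_is_surj surj_f_inv_f)
qed

lemma gpow_pred:
  assumes "bij g" shows "gpow g (k - 1) x = inv g (gpow g k x)"
  using gpow_succ[OF assms, of "k - 1" x] assms by (simp add: bij_is_inj)

lemma gpow_gpow:
  assumes "bij g" shows "gpow g a (gpow g b x) = gpow g (a + b) x"
proof (induction a rule: int_induct[where k = 0])
  case (step1 i)
  then show ?case using gpow_succ[OF assms] by (metis add.commute add.left_commute)
next
  case (step2 i)
  then show ?case using gpow_pred[OF assms] by (metis diff_add_eq)
qed simp

lemma gpow_add_period: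
  assumes "bij g" and "g ^^ n = id"
  shows "gpow g (a + int n * t) x = gpow g a x"
proof -
  have forward: "gpow g (int n) y = y" for y
    using assms(2) by (simp add: gpow_of_nat)
  have backward: "gpow g (- int n) y = y" for y
    using gpow_gpow[OF assms(1), of "- int n" "int n" y] forward by simp
  have "gpow g (int n * t) y = y" for y
  proof (induction t rule: int_induct[where k = 0])
    case (step1 i)
    then show ?case using gpow_gpow[OF assms(1), of "int n * i" "int n" y] forward
      by (simp add: algebra_simps)
  next
    case (step2 i)
    then show ?case using gpow_gpow[OF assms(1), of "int n * i" "- int n" y] backward
      by (simp add: algebra_simps)
  qed simp
  then show ?thesis
    using gpow_gpow[OF assms(1), of a "int n * t" x] by simp
qed

lemma funpow_eq_id_if_perm_order_dvd:
  assumes "perm_order g dvd n" and "n > 0"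
  shows "g ^^ n = id"
proof -
  have "\<exists>k>0. g ^^ k = id"
    using assms by (auto simp: perm_order_def split: if_splits)
  then have "perm_order g > 0 \<and> g ^^ perm_order g = id"
    unfolding perm_order_def using LeastI_ex[of "\<lambda>k. k > 0 \<and> g ^^ k = id"] by simp
  with assms(1) show ?thesis
    by (metis dvd_def funpow_mult id_funpow)
qed

lemma is_moufang_loop_retract:
  fixes m :: "'b \<Rightarrow> 'b \<Rightarrow> 'b"
  assumes M_eq: "\<And>p q. M p q = red (m p q)"
    and red_in: "\<And>p. red p \<in> Q" and red_id: "\<And>p. p \<in> Q \<Longrightarrow> red p = p"
    and red_m: "\<And>p q. red (m (red p) (red q)) = red (m p q)"
    and e_in: "e \<in> Q" and left_id: "\<And>a. m e a = a" and right_id: "\<And>a. m a e = a"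
    and left_inv: "\<And>a b. m (iv a) (m a b) = b" and right_inv: "\<And>a b. m (m b a) (iv a) = b"
    and iv_iv: "\<And>a. iv (iv a) = a"
    and moufang: "\<And>a b c. m (m a b) (m c a) = m (m a (m b c)) a"
  shows "is_moufang_loop Q M e"
proof -
  have red_left: "red (m (red p) q) = red (m p q)" for p q
    using red_m[of p q] red_m[of "red p" q] red_id[OF red_in] by simp
  have red_right: "red (m p (red q)) = red (m p q)" for p q
    using red_m[of p q] red_m[of p "red q"] red_id[OF red_in] by simp
  have left_div: "\<exists>!x. x \<in> Q \<and> red (m a x) = b" if "b \<in> Q" for a b
  proof
    show "red (m (iv a) b) \<in> Q \<and> red (m a (red (m (iv a) b))) = b"
      using red_in red_right iv_iv left_inv red_id[OF that] by metis
  next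
    fix x assume "x \<in> Q \<and> red (m a x) = b"
    then show "x = red (m (iv a) b)"
      using red_right left_inv red_id by metis
  qed
  have right_div: "\<exists>!y. y \<in> Q \<and> red (m y a) = b" if "b \<in> Q" for a b
  proof
    show "red (m b (iv a)) \<in> Q \<and> red (m (red (m b (iv a))) a) = b"
      using red_in red_left iv_iv right_inv red_id[OF that] by metis
  next
    fix y assume "y \<in> Q \<and> red (m y a) = b"
    then show "y = red (m b (iv a))"
      using red_left right_inv red_id by metis
  qed
  show ?thesis
    unfolding is_moufang_loop_def is_loop_def M_eq
    using e_in red_in red_id left_id right_id left_div right_div
    by (simp add: red_left red_right moufang)
qed

section \<open>Construction pairs\<close>

locale cpair =
  fixes g :: "'a::ab_group_add \<Rightarrow> 'a" and \<gamma> :: "'a \<Rightarrow> 'a \<Rightarrow> 'a"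
  assumes construction_pair: "construction_pair g \<gamma>"
begin

lemma bij_g: "bij g"
  using construction_pair by (simp add: construction_pair_def)

lemma \<gamma>_commute: "\<gamma> x y = \<gamma> y x"
  using construction_pair by (simp add: construction_pair_def)

lemma \<gamma>_self [simp]: "\<gamma> x x = 0"
  using construction_pair by (simp add: construction_pair_def)

lemma \<gamma>_add_left [simp]: "\<gamma> (x + y) z = \<gamma> x z + \<gamma> y z"
  using construction_pair by (simp add: construction_pair_def)

lemma \<gamma>_add_right [simp]: "\<gamma> x (y + z) = \<gamma> x y + \<gamma> x z"
  using construction_pair by (simp add: construction_pair_def)

lemma inv_g_add_g: "inv g (g x + g y) = x + y + \<gamma> x y + inv g (\<gamma> x y) + inv g (inv g (\<gamma> x y))"
  using construction_pair by (simp add: construction_pair_def numeral_2_eq_2)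

lemma \<gamma>_\<gamma> [simp]: "\<gamma> (\<gamma> x y) z = 0"
  using construction_pair unfolding construction_pair_def by blast

lemma inv_g_\<gamma>: "inv g (\<gamma> x y) = \<gamma> (g x) y"
  using construction_pair by (simp add: construction_pair_def)

lemma \<gamma>_g_left: "\<gamma> (g x) y = inv g (\<gamma> x y)"
  using inv_g_\<gamma> by simp

lemma inv_g_g [simp]: "inv g (g x) = x"
  using bij_g by (simp add: bij_is_inj)

lemma g_inv_g [simp]: "g (inv g x) = x"
  using bij_g by (simp add: bij_is_surj surj_f_inv_f)

lemma \<gamma>_zero_left [simp]: "\<gamma> 0 y = 0"
  using \<gamma>_add_left[of 0 0 y] by simp

lemma \<gamma>_zero_right [simp]: "\<gamma> x 0 = 0"
  using \<gamma>_add_right[of x 0 0] by simp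

lemma \<gamma>_minus_left [simp]: "\<gamma> (- x) y = - \<gamma> x y"
  using \<gamma>_add_left[of x "- x" y] by (simp add: eq_neg_iff_add_eq_0 add.commute)

lemma \<gamma>_minus_right [simp]: "\<gamma> x (- y) = - \<gamma> x y"
  using \<gamma>_add_right[of x y "- y"] by (simp add: eq_neg_iff_add_eq_0 add.commute)

lemma \<gamma>_add_self [simp]: "\<gamma> x y + \<gamma> x y = 0"
proof -
  have "0 = \<gamma> (x + y) (x + y)"
    by simp
  also have "\<dots> = \<gamma> x y + \<gamma> y x"
    unfolding \<gamma>_add_left \<gamma>_add_right by simp
  also have "\<dots> = \<gamma> x y + \<gamma> x y"
    by (simp only: \<gamma>_commute[of y x])
  finally show ?thesis
    by simp
qed

lemma g_zero [simp]: "g 0 = 0"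
  using inv_g_\<gamma>[of 0 0] g_inv_g[of 0] by simp

lemma gpow_zero [simp]: "gpow g m 0 = 0"
proof (induction m rule: int_induct[where k = 0])
  case (step1 i)
  then show ?case by (simp add: gpow_succ[OF bij_g])
next
  case (step2 i)
  then show ?case using inv_g_g[of 0] by (simp add: gpow_pred[OF bij_g])
qed simp

declare gpow_gpow[OF bij_g, simp]

lemma \<gamma>_gpow_left [simp]: "\<gamma> (gpow g m x) y = gpow g (- m) (\<gamma> x y)"
proof (induction m arbitrary: x rule: int_induct[where k = 0])
  case (step1 i)
  have "\<gamma> (gpow g (i + 1) x) y = inv g (gpow g (- i) (\<gamma> x y))"
    using step1 by (simp add: gpow_succ[OF bij_g] \<gamma>_g_left)
  also have "\<dots> = gpow g (- (i + 1)) (\<gamma> x y)"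
    using gpow_pred[OF bij_g, of "- i"] by simp
  finally show ?case .
next
  case (step2 i)
  have "inv g (\<gamma> (gpow g (i - 1) x) y) = gpow g (- i) (\<gamma> x y)"
    using step2 by (simp add: gpow_pred[OF bij_g] inv_g_\<gamma>)
  then have "\<gamma> (gpow g (i - 1) x) y = g (gpow g (- i) (\<gamma> x y))"
    by (metis g_inv_g)
  also have "\<dots> = gpow g (- (i - 1)) (\<gamma> x y)"
    using gpow_succ[OF bij_g, of "- i"] by simp
  finally show ?case .
qed simp

lemma \<gamma>_gpow_right [simp]: "\<gamma> x (gpow g m y) = gpow g (- m) (\<gamma> x y)"
  using \<gamma>_gpow_left[of m y x] by (simp add: \<gamma>_commute)

lemma \<gamma>_in_Rad [simp]: "\<gamma> x y \<in> Rad \<gamma>"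
  by (simp add: Rad_def)

lemma Rad_add [simp]: "u \<in> Rad \<gamma> \<Longrightarrow> v \<in> Rad \<gamma> \<Longrightarrow> u + v \<in> Rad \<gamma>"
  by (simp add: Rad_def)

lemma sum_in_Rad: "(\<And>k. k \<in> A \<Longrightarrow> f k \<in> Rad \<gamma>) \<Longrightarrow> sum f A \<in> Rad \<gamma>"
  by (induction A rule: infinite_finite_induct) (auto simp: Rad_def)

lemma gpow_in_Rad [simp]: "u \<in> Rad \<gamma> \<Longrightarrow> gpow g m u \<in> Rad \<gamma>"
  by (simp add: Rad_def)

lemma \<gamma>_Rad_left [simp]: "u \<in> Rad \<gamma> \<Longrightarrow> \<gamma> u v = 0"
  by (simp add: Rad_def)

lemma \<gamma>_Rad_right [simp]: "u \<in> Rad \<gamma> \<Longrightarrow> \<gamma> v u = 0"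
  by (metis \<gamma>_Rad_left \<gamma>_commute)

lemma inv_g_zero [simp]: "inv g 0 = 0"
  using inv_g_g[of 0] by simp

lemma g_add_Rad: assumes "u \<in> Rad \<gamma>" shows "g (u + v) = g u + g v"
proof -
  have "inv g (g u + g v) = u + v"
    using inv_g_add_g[of u v] assms by simp
  then show ?thesis
    by (metis g_inv_g)
qed

lemma inv_g_add_Rad: assumes "u \<in> Rad \<gamma>" shows "inv g (u + v) = inv g u + inv g v"
proof -
  have "inv g u \<in> Rad \<gamma>"
    using gpow_in_Rad[OF assms, of "- 1"] by (simp add: gpow_minus_1)
  then show ?thesis
    using inv_g_add_g[of "inv g u" "inv g v"] by simp
qed

lemma \<gamma>_sum_left: "\<gamma> (sum f A) y = (\<Sum>k\<in>A. \<gamma> (f k) y)"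
  by (induction A rule: infinite_finite_induct) simp_all

lemma sum_funpow_in_Rad:
  assumes "r_gg g \<gamma> dvd n" and "n > 0"
  shows "(\<Sum>k<n. (g ^^ k) w) \<in> Rad \<gamma>"
proof -
  let ?r = "r_gg g \<gamma>"
  have "\<exists>r>0. \<forall>x. (\<Sum>k<r. (g ^^ k) x) \<in> Rad \<gamma>"
    using assms by (auto simp: r_gg_def split: if_splits)
  then have r: "\<forall>x. (\<Sum>k<?r. (g ^^ k) x) \<in> Rad \<gamma>"
    unfolding r_gg_def
    using LeastI_ex[of "\<lambda>r. r > 0 \<and> (\<forall>x. (\<Sum>k<r. (g ^^ k) x) \<in> Rad \<gamma>)"] by simp
  obtain q where n: "n = q * ?r"
    using assms(1) by (metis dvd_def mult.commute)
  have block: "(\<Sum>k\<in>{p * ?r..<p * ?r + ?r}. (g ^^ k) w) = (\<Sum>k<?r. (g ^^ k) ((g ^^ (p * ?r)) w))" for p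
    using sum.shift_bounds_nat_ivl[of "\<lambda>k. (g ^^ k) w" 0 "p * ?r" ?r]
    by (simp add: funpow_add atLeast0LessThan add.commute)
  have "(\<Sum>k<n. (g ^^ k) w) = (\<Sum>p<q. \<Sum>k<?r. (g ^^ k) ((g ^^ (p * ?r)) w))"
    unfolding n sum.nat_group[symmetric] block ..
  also have "\<dots> \<in> Rad \<gamma>"
    by (rule sum_in_Rad) (use r in blast)
  finally show ?thesis .
qed

lemma gpow_add_Rad: "u \<in> Rad \<gamma> \<Longrightarrow> gpow g m (u + v) = gpow g m u + gpow g m v"
proof (induction m arbitrary: u v rule: int_induct[where k = 0])
  case (step1 i)
  then show ?case by (simp add: gpow_succ[OF bij_g] g_add_Rad)
next
  case (step2 i)
  then show ?case by (simp add: gpow_pred[OF bij_g] inv_g_add_Rad)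
qed simp

lemma gpow_add_Rad': "v \<in> Rad \<gamma> \<Longrightarrow> gpow g m (u + v) = gpow g m u + gpow g m v"
  using gpow_add_Rad[of v m u] by (simp add: add.commute)

lemma gpow_sum_Rad:
  "(\<And>k. k \<in> A \<Longrightarrow> f k \<in> Rad \<gamma>) \<Longrightarrow> gpow g m (sum f A) = (\<Sum>k\<in>A. gpow g m (f k))"
  by (induction A rule: infinite_finite_induct) (simp_all add: gpow_add_Rad)

definition orbit_sum :: "'a \<Rightarrow> int \<Rightarrow> int \<Rightarrow> 'a" where
  "orbit_sum c a b = (\<Sum>k\<in>Ival a b. gpow g (- k) c)"

lemma orbit_sum_commute: "orbit_sum c a b = orbit_sum c b a"
  by (simp add: orbit_sum_def Ival_commute)

lemma orbit_sum_self [simp]: "orbit_sum c a a = 0"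
  by (simp add: orbit_sum_def)

lemma orbit_sum_cocycle:
  "orbit_sum (\<gamma> u v) a b + orbit_sum (\<gamma> u v) b d = orbit_sum (\<gamma> u v) a d"
proof -
  have "gpow g (- k) (\<gamma> u v) + gpow g (- k) (\<gamma> u v) = 0" for k
    using \<gamma>_add_self[of "gpow g k u" v] by simp
  then show ?thesis
    unfolding orbit_sum_def Ival_symdiff[of a b d, symmetric]
    by (intro sum_symdiff_self_inverse) simp_all
qed

lemma orbit_sum_add_self [simp]: "orbit_sum (\<gamma> u v) a b + orbit_sum (\<gamma> u v) a b = 0"
  using orbit_sum_cocycle[of u v a b a] by (simp add: orbit_sum_commute[of _ b a])

lemma minus_orbit_sum [simp]: "- orbit_sum (\<gamma> u v) a b = orbit_sum (\<gamma> u v) a b"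
  using orbit_sum_add_self[of u v a b] by (simp add: neg_eq_iff_add_eq_0)

lemma orbit_sum_shift: "orbit_sum (gpow g m c) a b = orbit_sum c (a - m) (b - m)"
proof -
  have "inj_on (\<lambda>k. k - m) (Ival a b)"
    by (simp add: inj_on_def)
  then have "orbit_sum c (a - m) (b - m) = (\<Sum>k\<in>Ival a b. gpow g (- (k - m)) c)"
    unfolding orbit_sum_def Ival_shift[symmetric] by (simp add: sum.reindex)
  then show ?thesis
    by (simp add: orbit_sum_def algebra_simps)
qed

lemma orbit_sum_in_Rad [simp]: "c \<in> Rad \<gamma> \<Longrightarrow> orbit_sum c a b \<in> Rad \<gamma>"
  unfolding orbit_sum_def by (simp add: sum_in_Rad)

lemma gpow_orbit_sum: "c \<in> Rad \<gamma> \<Longrightarrow> gpow g m (orbit_sum c a b) = orbit_sum c (a - m) (b - m)"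
  unfolding orbit_sum_shift[symmetric] by (simp add: orbit_sum_def gpow_sum_Rad add.commute)

lemma orbit_sum_add: "c \<in> Rad \<gamma> \<Longrightarrow> orbit_sum (c + d) a b = orbit_sum c a b + orbit_sum d a b"
  by (simp add: orbit_sum_def gpow_add_Rad sum.distrib)

lemma g_add: "g (u + v) = g u + g v + orbit_sum (\<gamma> u v) 2 (- 1)"
proof -
  let ?c = "\<gamma> u v"
  let ?d = "?c + inv g ?c + inv g (inv g ?c)"
  have d_Rad: "?d \<in> Rad \<gamma>"
    by (simp add: inv_g_\<gamma>)
  have "inv g (g u + g v) = ?d + (u + v)"
    by (simp add: inv_g_add_g algebra_simps)
  then have "g u + g v = g (?d + (u + v))"
    by (metis g_inv_g)
  also have "\<dots> = g ?d + g (u + v)"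
    using d_Rad by (rule g_add_Rad)
  also have "g ?d = g ?c + ?c + inv g ?c"
  proof -
    have "inv g ?c \<in> Rad \<gamma>"
      by (simp add: inv_g_\<gamma>)
    then show ?thesis
      by (simp add: g_add_Rad)
  qed
  also have "\<dots> = orbit_sum ?c 2 (- 1)"
  proof -
    have "Ival 2 (- 1) = {- 1, 0, 1}"
      by (auto simp: Ival_def)
    then show ?thesis
      by (simp add: orbit_sum_def gpow_1 gpow_minus_1 algebra_simps)
  qed
  finally have "g (u + v) = g u + g v - orbit_sum ?c 2 (- 1)"
    by (simp add: algebra_simps)
  then show ?thesis
    by (simp add: diff_conv_add_uminus)
qed

lemma inv_g_add: "inv g (u + v) = inv g u + inv g v + orbit_sum (\<gamma> u v) (- 2) 1"
proof -
  let ?c = "\<gamma> u v"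
  let ?c' = "\<gamma> (inv g u) (inv g v)"
  have c': "?c' = gpow g 2 ?c"
    using \<gamma>_gpow_left[of "- 1" u "inv g v"] \<gamma>_gpow_right[of u "- 1" v]
    by (simp add: gpow_minus_1)
  have "inv g (u + v) = inv g (g (inv g u) + g (inv g v))"
    by simp
  also have "\<dots> = inv g u + inv g v + (?c' + inv g ?c' + inv g (inv g ?c'))"
    by (simp only: inv_g_add_g add.assoc)
  also have "?c' + inv g ?c' + inv g (inv g ?c') = orbit_sum ?c (- 2) 1"
  proof -
    have "Ival (- 2) 1 = {- 2, - 1, 0}"
      by (auto simp: Ival_def)
    then show ?thesis
      using gpow_pred[OF bij_g, of 2 ?c] gpow_pred[OF bij_g, of 1 ?c]
      by (simp add: c' orbit_sum_def gpow_1 algebra_simps)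
  qed
  finally show ?thesis .
qed

abbreviation gpow_expands :: "int \<Rightarrow> bool" where
  "gpow_expands m \<equiv>
     \<forall>u v. gpow g m (u + v) = gpow g m u + gpow g m v + orbit_sum (\<gamma> u v) (2 * m) (- m)"

lemma gpow_expands_add:
  assumes a: "gpow_expands a" and b: "gpow_expands b"
  shows "gpow_expands (a + b)"
proof (intro allI)
  fix u v
  let ?c = "\<gamma> u v"
  have "gpow g (a + b) (u + v) = gpow g a (gpow g b (u + v))"
    by simp
  also have "\<dots> = gpow g a (gpow g b u + gpow g b v + orbit_sum ?c (2 * b) (- b))"
    using b by simp
  also have "\<dots> = gpow g a (gpow g b u + gpow g b v) + orbit_sum ?c (2 * b - a) (- (a + b))"
  proof -
    have "- b - a = - (a + b)"
      by simp
    then have "gpow g a (orbit_sum ?c (2 * b) (- b)) = orbit_sum ?c (2 * b - a) (- (a + b))"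
      using gpow_orbit_sum[of ?c a "2 * b" "- b"] by (simp only: \<gamma>_in_Rad simp_thms)
    then show ?thesis
      by (simp add: gpow_add_Rad')
  qed
  also have "gpow g a (gpow g b u + gpow g b v) =
      gpow g (a + b) u + gpow g (a + b) v + orbit_sum ?c (2 * (a + b)) (2 * b - a)"
    using a by (simp add: orbit_sum_shift algebra_simps)
  finally show "gpow g (a + b) (u + v) =
      gpow g (a + b) u + gpow g (a + b) v + orbit_sum ?c (2 * (a + b)) (- (a + b))"
    by (simp only: add.assoc orbit_sum_cocycle)
qed

lemma gpow_add: "gpow g m (u + v) = gpow g m u + gpow g m v + orbit_sum (\<gamma> u v) (2 * m) (- m)"
proof -
  have one: "gpow_expands 1"
    by (simp add: gpow_1 g_add)
  have minus_one: "gpow_expands (- 1)"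
    by (simp add: gpow_minus_1 inv_g_add)
  have "gpow_expands m"
  proof (induction m rule: int_induct[where k = 0])
    case (step1 i)
    then show ?case using gpow_expands_add[OF _ one] by blast
  next
    case (step2 i)
    then show ?case using gpow_expands_add[OF _ minus_one] by simp
  qed simp
  then show ?thesis by blast
qed

lemma orbit_sum_zero [simp]: "orbit_sum 0 a b = 0"
  by (simp add: orbit_sum_def)

lemma orbit_sum_minus: "c \<in> Rad \<gamma> \<Longrightarrow> orbit_sum (- c) a b = - orbit_sum c a b"
  using orbit_sum_add[of c "- c" a b] by (simp add: eq_neg_iff_add_eq_0 add.commute)

lemma gpow_minus: "gpow g m (- u) = - gpow g m u"
  using gpow_add[of m u "- u"] by (simp add: eq_neg_iff_add_eq_0 add.commute)

text \<open>Normal form: by the cocycle identity every orbit sum of \<open>\<gamma> u v\<close> is a sum of orbit sums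
  starting at 0, which have order 2 and therefore cancel in pairs.\<close>

definition orbit_sum0 :: "'a \<Rightarrow> int \<Rightarrow> 'a" where
  "orbit_sum0 c a = orbit_sum c 0 a"

lemma orbit_sum_eq_orbit_sum0:
  "orbit_sum (\<gamma> u v) a b = orbit_sum0 (\<gamma> u v) a + orbit_sum0 (\<gamma> u v) b"
  unfolding orbit_sum0_def using orbit_sum_cocycle[of u v a 0 b]
  by (simp add: orbit_sum_commute[of _ a 0])

lemma gpow_\<gamma>_eq_orbit_sum0:
  "gpow g m (\<gamma> u v) = orbit_sum0 (\<gamma> u v) (- m) + orbit_sum0 (\<gamma> u v) (1 - m)"
proof -
  have "Ival (- m) (1 - m) = {- m}"
    by (auto simp: Ival_def)
  then have "orbit_sum (\<gamma> u v) (- m) (1 - m) = gpow g m (\<gamma> u v)"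
    by (simp add: orbit_sum_def)
  then show ?thesis
    by (simp add: orbit_sum_eq_orbit_sum0)
qed

lemma orbit_sum0_add_self: "orbit_sum0 (\<gamma> u v) a + orbit_sum0 (\<gamma> u v) a = 0"
  by (simp add: orbit_sum0_def)

lemma orbit_sum0_add_self_left: "orbit_sum0 (\<gamma> u v) a + (orbit_sum0 (\<gamma> u v) a + w) = w"
  by (simp add: orbit_sum0_def add.assoc[symmetric])

lemma minus_orbit_sum0 [simp]: "- orbit_sum0 (\<gamma> u v) a = orbit_sum0 (\<gamma> u v) a"
  by (simp add: orbit_sum0_def)

lemma sd_comp_eq: "sd_comp g \<gamma> i x j y = gpow g (- j) x + y + orbit_sum (\<gamma> x y) (i + j) (- j)"
  by (simp add: sd_comp_def orbit_sum_def)

lemmas sd_comp_expand = sd_comp_eq gpow_add gpow_minus gpow_orbit_sum orbit_sum_shift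
  orbit_sum_add orbit_sum_minus

lemmas orbit_sum0_normalize = orbit_sum_eq_orbit_sum0 gpow_\<gamma>_eq_orbit_sum0 \<gamma>_commute

lemmas cancel_orbit_sum0 = diff_conv_add_uminus minus_add_distrib minus_minus add_ac
  orbit_sum0_add_self orbit_sum0_add_self_left minus_orbit_sum0 add_0_left add_0_right

text \<open>The loop for the infinite cyclic group; \<open>sd_mult n\<close> is its reduction modulo \<open>n\<close>.\<close>

fun zmult :: "int \<times> 'a \<Rightarrow> int \<times> 'a \<Rightarrow> int \<times> 'a" where
  "zmult (i, x) (j, y) = (i + j, sd_comp g \<gamma> i x j y)"

fun zinv :: "int \<times> 'a \<Rightarrow> int \<times> 'a" where
  "zinv (i, x) = (- i, - gpow g i x)"

lemma zmult_moufang: "zmult (zmult a b) (zmult c a) = zmult (zmult a (zmult b c)) a"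
  by (cases a, cases b, cases c)
    (simp add: sd_comp_expand, (simp add: orbit_sum0_normalize)?, (simp add: algebra_simps)?,
     (simp only: cancel_orbit_sum0)?)

lemma zmult_left_inverse: "zmult (zinv a) (zmult a b) = b"
  by (cases a, cases b)
    (simp add: sd_comp_expand, (simp add: orbit_sum0_normalize)?, (simp add: algebra_simps)?,
     (simp only: cancel_orbit_sum0)?)

lemma zmult_right_inverse: "zmult (zmult b a) (zinv a) = b"
  by (cases a, cases b)
    (simp add: sd_comp_expand, (simp add: orbit_sum0_normalize)?, (simp add: algebra_simps)?,
     (simp only: cancel_orbit_sum0)?)

lemma zinv_zinv: "zinv (zinv a) = a"
  by (cases a) (simp add: gpow_minus)

lemma zmult_zero_left: "zmult (0, 0) a = a"
  by (cases a) (simp add: sd_comp_eq)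

lemma zmult_zero_right: "zmult a (0, 0) = a"
  by (cases a) (simp add: sd_comp_eq)

lemma zmult_zinv_right: "zmult a (zinv a) = (0, 0)"
  using zmult_right_inverse[where b = "(0, 0)"] by (simp add: zmult_zero_left)

lemma zmult_zinv_left: "zmult (zinv a) a = (0, 0)"
  using zmult_left_inverse[where b = "(0, 0)"] by (simp add: zmult_zero_right)

end

section \<open>Reduction modulo the order of the cyclic group\<close>

locale cpair_mod = cpair +
  fixes n :: nat
  assumes orders_dvd: "n > 0 \<Longrightarrow> perm_order g dvd n \<and> r_gg g \<gamma> dvd n"
begin

lemma gpow_mod: "gpow g (a + int n * t) x = gpow g a x"
proof (cases "n = 0")
  case False
  then show ?thesis
    using gpow_add_period[OF bij_g funpow_eq_id_if_perm_order_dvd] orders_dvd by simp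
qed simp

lemma orbit_sum_period: "orbit_sum (\<gamma> x y) a (a + int n) = 0"
proof (cases "n = 0")
  case False
  let ?u = "gpow g a x"
  have "orbit_sum (\<gamma> x y) a (a + int n) = orbit_sum (\<gamma> ?u y) 0 (int n)"
    using orbit_sum_shift[of "- a" "\<gamma> x y" 0 "int n"] by (simp add: add.commute)
  also have "\<dots> = (\<Sum>k\<in>int ` {..<n}. gpow g (- k) (\<gamma> ?u y))"
    by (simp add: orbit_sum_def Ival_def image_int_atLeastLessThan atLeast0LessThan[symmetric])
  also have "\<dots> = \<gamma> (\<Sum>k<n. (g ^^ k) ?u) y"
    by (simp add: sum.reindex \<gamma>_sum_left gpow_of_nat[symmetric])
  also have "\<dots> = 0"
    using sum_funpow_in_Rad orders_dvd False by simp
  finally show ?thesis .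
qed simp

lemma orbit_sum_periods: "orbit_sum (\<gamma> x y) a (a + int n * t) = 0"
proof (induction t rule: int_induct[where k = 0])
  case (step1 i)
  have "orbit_sum (\<gamma> x y) (a + int n * i) (a + int n * (i + 1)) = 0"
    using orbit_sum_period[of x y "a + int n * i"] by (simp add: algebra_simps)
  then show ?case
    using step1 orbit_sum_cocycle[of x y a "a + int n * i" "a + int n * (i + 1)"] by simp
next
  case (step2 i)
  have "orbit_sum (\<gamma> x y) (a + int n * (i - 1)) (a + int n * i) = 0"
    using orbit_sum_period[of x y "a + int n * (i - 1)"] by (simp add: algebra_simps)
  then show ?case
    using step2 orbit_sum_cocycle[of x y a "a + int n * (i - 1)" "a + int n * i"] by simp
qed simp

lemma orbit_sum_mod:
  "orbit_sum (\<gamma> x y) (a + int n * s) (b + int n * t) = orbit_sum (\<gamma> x y) a b"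
  using orbit_sum_cocycle[of x y "a + int n * s" a b] orbit_sum_cocycle[of x y "a + int n * s" b "b + int n * t"]
    orbit_sum_periods[of x y a s] orbit_sum_periods[of x y b t]
  by (simp add: orbit_sum_commute[of _ "a + int n * s"])

lemma sd_comp_mod:
  assumes "i mod int n = i' mod int n" and "j mod int n = j' mod int n"
  shows "sd_comp g \<gamma> i x j y = sd_comp g \<gamma> i' x j' y"
proof -
  obtain s where s: "i' = i + int n * s"
    using assms(1) by (metis mod_eq_dvd_iff dvdE add_diff_cancel_left' diff_add_cancel)
  obtain t where t: "j' = j + int n * t"
    using assms(2) by (metis mod_eq_dvd_iff dvdE add_diff_cancel_left' diff_add_cancel)
  have "- j' = - j + int n * - t" and "i' + j' = i + j + int n * (s + t)"
    using s t by (simp_all add: algebra_simps)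
  then show ?thesis
    by (simp only: sd_comp_eq gpow_mod orbit_sum_mod)
qed

definition reduce :: "int \<times> 'a \<Rightarrow> int \<times> 'a" where
  "reduce p = (fst p mod int n, snd p)"

lemma sd_mult_eq_reduce_zmult: "sd_mult n g \<gamma> p q = reduce (zmult p q)"
  by (cases p, cases q) (simp add: sd_mult_def reduce_def)

lemma reduce_in_sd_carrier: "reduce p \<in> sd_carrier n"
  by (cases "n = 0") (auto simp: reduce_def sd_carrier_def cyc_carrier_def)

lemma reduce_id: "p \<in> sd_carrier n \<Longrightarrow> reduce p = p"
  by (cases p) (auto simp: reduce_def sd_carrier_def cyc_carrier_def split: if_splits)

lemma reduce_zmult: "reduce (zmult (reduce p) (reduce q)) = reduce (zmult p q)"
proof (cases p, cases q)
  fix i x j y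
  assume "p = (i, x)" and "q = (j, y)"
  then show ?thesis
    using sd_comp_mod[of "i mod int n" i "j mod int n" j x y]
    by (simp add: reduce_def mod_add_eq)
qed

lemma zero_in_sd_carrier: "(0, 0) \<in> sd_carrier n"
  by (auto simp: sd_carrier_def cyc_carrier_def)

lemma is_moufang_loop_sd_mult: "is_moufang_loop (sd_carrier n) (sd_mult n g \<gamma>) (0, 0)"
  by (rule is_moufang_loop_retract[where red = reduce and m = zmult and iv = zinv])
    (fact sd_mult_eq_reduce_zmult reduce_in_sd_carrier reduce_id reduce_zmult zero_in_sd_carrier
      zmult_zero_left zmult_zero_right zmult_left_inverse zmult_right_inverse zinv_zinv zmult_moufang)+

lemma sd_mult_inverse:
  assumes "i \<in> cyc_carrier n"
  shows "sd_mult n g \<gamma> (i, x) ((- i) mod int n, - gpow g i x) = (0, 0)"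
    and "sd_mult n g \<gamma> ((- i) mod int n, - gpow g i x) (i, x) = (0, 0)"
proof -
  have inv: "((- i) mod int n, - gpow g i x) = reduce (zinv (i, x))"
    by (simp add: reduce_def)
  have i: "(i, x) = reduce (i, x)"
    using assms by (simp add: reduce_id sd_carrier_def)
  have zero: "reduce (0, 0) = (0, 0)"
    by (rule reduce_id[OF zero_in_sd_carrier])
  show "sd_mult n g \<gamma> (i, x) ((- i) mod int n, - gpow g i x) = (0, 0)"
    unfolding inv sd_mult_eq_reduce_zmult
    by (subst i) (simp only: reduce_zmult zmult_zinv_right zero)
  show "sd_mult n g \<gamma> ((- i) mod int n, - gpow g i x) (i, x) = (0, 0)"
    unfolding inv sd_mult_eq_reduce_zmult
    by (subst (2) i) (simp only: reduce_zmult zmult_zinv_left zero)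
qed

end

theorem mainTheorem2:
  fixes g :: "'a::ab_group_add \<Rightarrow> 'a" and \<gamma> :: "'a \<Rightarrow> 'a \<Rightarrow> 'a" and n :: nat
  assumes "construction_pair g \<gamma>"
    and "n > 0 \<Longrightarrow> perm_order g dvd n \<and> r_gg g \<gamma> dvd n"
  shows "(\<forall>i i' j j' x y. i mod int n = i' mod int n \<longrightarrow> j mod int n = j' mod int n \<longrightarrow>
            sd_comp g \<gamma> i x j y = sd_comp g \<gamma> i' x j' y)
       \<and> is_moufang_loop (sd_carrier n) (sd_mult n g \<gamma>) (0, 0)
       \<and> (\<forall>i\<in>cyc_carrier n. \<forall>x.
            ((- i) mod int n, - gpow g i x) \<in> sd_carrier n \<and>
            sd_mult n g \<gamma> (i, x) ((- i) mod int n, - gpow g i x) = (0, 0) \<and>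
            sd_mult n g \<gamma> ((- i) mod int n, - gpow g i x) (i, x) = (0, 0))"
proof -
  interpret cpair_mod g \<gamma> n
    by unfold_locales (use assms in auto)
  have "((- i) mod int n, y) \<in> sd_carrier n" for i and y :: 'a
    using reduce_in_sd_carrier[of "(- i, y)"] by (simp add: reduce_def)
  then show ?thesis
    using sd_comp_mod is_moufang_loop_sd_mult sd_mult_inverse by blast
qed

end
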